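(* Let $\alpha<0$, let $f=(1-\alpha\varphi)^{1/\alpha}\in\mathcal{C}^+_\alpha(\mathbb{R}^n)$, let $0\le l<n$ and $p\ge 0$. If $-\frac{1}{n-l+p}<\alpha$, then $$\int_{\mathbb{R}^n}|x|^p\,\big(1-\alpha\varphi(x)\big)^{\frac1\alpha-l}\,dx<+\infty .$$ In particular, if $-\frac1n<\alpha<0$, then $\int_{\mathbb{R}^n}f(x)\,dx<+\infty$ and $\int_{\mathbb{R}^n}f(x)^{1-\alpha}\,dx<+\infty$.
   Context: $\mathrm{Conv}(\mathbb{R}^n)$ denotes the set of proper, convex, lower semi-continuous functions $\varphi:\mathbb{R}^n\to\mathbb{R}\cup\{+\infty\}$. A function $\varphi$ is coercive if $\liminf_{|x|\to\infty}\varphi(x)/|x|>0$. For $\alpha<0$, $\mathcal{C}^+_\alpha(\mathbb{R}^n)$ is the set of functions $f=(1-\alpha\varphi)^{1/\alpha}$ where $\varphi\in\mathrm{Conv}(\mathbb{R}^n)$ is nonnegative and coercive ($\varphi$ is called the base of $f$), with the convention that $f(x)=0$ (and $(1-\alpha\varphi(x))^{s}=0$ for $s<0$) when $\varphi(x)=+\infty$. *)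

theory Defs
  imports "HOL-Analysis.Analysis"
begin

text \<open>Functions R^n -> R \<union> {+\<infinity>} are modelled as maps into ereal that never take -\<infinity>.\<close>

definition lsc_ereal :: "('a::topological_space \<Rightarrow> ereal) \<Rightarrow> bool" where
  "lsc_ereal \<phi> \<longleftrightarrow> (\<forall>x. \<phi> x \<le> Liminf (at x) \<phi>)"

definition convex_ereal :: "('a::real_vector \<Rightarrow> ereal) \<Rightarrow> bool" where
  "convex_ereal \<phi> \<longleftrightarrow>
     (\<forall>x y t. 0 < t \<and> t < 1 \<longrightarrow>
        \<phi> (t *\<^sub>R x + (1 - t) *\<^sub>R y) \<le> ereal t * \<phi> x + ereal (1 - t) * \<phi> y)"

definition Conv :: "('a::real_normed_vector \<Rightarrow> ereal) set" where
  "Conv = {\<phi>. (\<exists>x. \<phi> x \<noteq> \<infinity>) \<and> (\<forall>x. \<phi> x \<noteq> -\<infinity>) \<and> convex_ereal \<phi> \<and> lsc_ereal \<phi>}"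

definition coercive :: "('a::real_normed_vector \<Rightarrow> ereal) \<Rightarrow> bool" where
  "coercive \<phi> \<longleftrightarrow> Liminf at_infinity (\<lambda>x. \<phi> x / ereal (norm x)) > 0"

text \<open>Admissible bases of functions in C^+_\<alpha>: nonnegative coercive elements of Conv.\<close>
definition base_C_plus :: "('a::real_normed_vector \<Rightarrow> ereal) set" where
  "base_C_plus = {\<phi>. \<phi> \<in> Conv \<and> (\<forall>x. 0 \<le> \<phi> x) \<and> coercive \<phi>}"

text \<open>(1 - \<alpha> v)^s with the convention that it is 0 when v = +\<infinity>
  (only used for exponents s < 0, where this is the paper's convention).\<close>
definition pow_base :: "real \<Rightarrow> ereal \<Rightarrow> real \<Rightarrow> real" where
  "pow_base \<alpha> v s = (if v = \<infinity> then 0 else (1 - \<alpha> * real_of_ereal v) powr s)"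

definition f_alpha :: "real \<Rightarrow> ('a \<Rightarrow> ereal) \<Rightarrow> 'a \<Rightarrow> real" where
  "f_alpha \<alpha> \<phi> x = pow_base \<alpha> (\<phi> x) (1 / \<alpha>)"

end

theory Submission
  imports Defs
begin

(* Nonnegativity and coercivity of \<phi> give 1 - \<alpha> \<phi>(x) \<ge> m (1 + |x|) for some m > 0, so for
   the negative exponent s = 1/\<alpha> - l the integrand is at most C (1 + |x|)^(p + s). The hypothesis
   on \<alpha> says exactly that p + s < -n, and (1 + |x|)^(-t) is integrable over R^n for t > n:
   it is dominated by the sum over k of 2^(-kt) times the indicator of the ball of radius 2^(k+1),
   whose integral is a geometric series with ratio 2^(n-t). *)

lemma ennreal_le_suminf: "(f :: nat \<Rightarrow> ennreal) k \<le> suminf f"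
  using sum_le_suminf[of f "{k}"] by (simp add: summableI)

lemma ex_two_power_ivl:
  fixes y :: real
  assumes "1 \<le> y"
  obtains k :: nat where "2 ^ k \<le> y" "y < 2 ^ Suc k"
proof -
  define k where "k = nat \<lfloor>log 2 y\<rfloor>"
  have "\<lfloor>log 2 y\<rfloor> = int k"
    using assms by (simp add: k_def)
  then have "2 powr real k \<le> y \<and> y < 2 powr (real k + 1)"
    using assms floor_log_eq_powr_iff[of y 2 "int k"] by simp
  then show ?thesis
    by (intro that[of k]) (simp_all add: powr_realpow powr_add)
qed

lemma one_plus_norm_powr_le_dyadic_sum:
  fixes x :: "'a::real_normed_vector" and t :: real
  assumes "0 \<le> t"
  shows "ennreal ((1 + norm x) powr (-t))
           \<le> (\<Sum>k. ennreal ((2 powr (-t)) ^ k) * indicator (ball 0 (2 ^ Suc k)) x)"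
proof -
  obtain k where k: "2 ^ k \<le> 1 + norm x" "1 + norm x < 2 ^ Suc k"
    using ex_two_power_ivl[of "1 + norm x"] by auto
  have "(1 + norm x) powr (-t) \<le> (2 ^ k) powr (-t)"
    using k assms by (intro powr_mono2') auto
  also have "\<dots> = (2 powr (-t)) ^ k"
    by (simp add: powr_realpow[symmetric] powr_powr powr_power mult.commute)
  finally have "ennreal ((1 + norm x) powr (-t))
      \<le> ennreal ((2 powr (-t)) ^ k) * indicator (ball 0 (2 ^ Suc k)) x"
    using k by (simp add: ennreal_leI)
  also have "\<dots> \<le> (\<Sum>k. ennreal ((2 powr (-t)) ^ k) * indicator (ball 0 (2 ^ Suc k)) x)"
    by (rule ennreal_le_suminf)
  finally show ?thesis .
qed

lemma nn_integral_one_plus_norm_powr_finite: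
  fixes t :: real
  assumes "real DIM('a::euclidean_space) < t"
  shows "(\<integral>\<^sup>+x. ennreal ((1 + norm (x::'a)) powr (-t)) \<partial>lborel) < \<infinity>"
proof -
  define n where "n = DIM('a)"
  define V where "V = unit_ball_vol (real n)"
  define q where "q = 2 powr (-t) * 2 ^ n"
  define g :: "nat \<Rightarrow> 'a \<Rightarrow> ennreal"
    where "g = (\<lambda>k x. ennreal ((2 powr (-t)) ^ k) * indicator (ball 0 (2 ^ Suc k)) x)"
  have "q = 2 powr (real n - t)"
    by (simp add: q_def powr_diff powr_minus_divide powr_realpow)
  then have q: "0 \<le> q" "q < 1"
    using assms powr_less_one[of 2 "real n - t"] by (auto simp: n_def)
  have integral_g: "(\<integral>\<^sup>+x. g k x \<partial>lborel) = ennreal (V * 2 ^ n * q ^ k)" for k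
  proof -
    have "(\<integral>\<^sup>+x. g k x \<partial>lborel) = ennreal ((2 powr (-t)) ^ k) * emeasure lborel (ball (0::'a) (2 ^ Suc k))"
      unfolding g_def by (rule nn_integral_cmult_indicator) simp
    also have "\<dots> = ennreal ((2 powr (-t)) ^ k * (V * (2 ^ Suc k) ^ n))"
      by (simp add: emeasure_ball V_def n_def ennreal_mult)
    also have "((2::real) ^ Suc k) ^ n = (2 ^ n) ^ Suc k"
      by (metis power_mult mult.commute)
    finally show ?thesis
      by (simp add: q_def power_mult_distrib mult_ac)
  qed
  have "0 \<le> t"
    using assms by linarith
  then have "(\<integral>\<^sup>+x. ennreal ((1 + norm (x::'a)) powr (-t)) \<partial>lborel) \<le> (\<integral>\<^sup>+x. (\<Sum>k. g k x) \<partial>lborel)"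
    unfolding g_def by (intro nn_integral_mono one_plus_norm_powr_le_dyadic_sum)
  also have "\<dots> = (\<Sum>k. \<integral>\<^sup>+x. g k x \<partial>lborel)"
    unfolding g_def
    by (intro nn_integral_suminf borel_measurable_times_ennreal borel_measurable_const
        borel_measurable_indicator) simp
  also have "\<dots> = (\<Sum>k. ennreal (V * 2 ^ n * q ^ k))"
    by (simp only: integral_g)
  also have "\<dots> < \<infinity>"
    using q by (simp add: V_def less_top[symmetric] ennreal_suminf_neq_top summable_mult summable_geometric)
  finally show ?thesis .
qed

lemma coercive_linear_lower_bound:
  fixes \<phi> :: "'a::real_normed_vector \<Rightarrow> ereal"
  assumes "coercive \<phi>"
  obtains c R where "0 < c" "\<And>x. R \<le> norm x \<Longrightarrow> ereal (c * norm x) < \<phi> x"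
proof -
  obtain c where c: "0 < ereal c" "ereal c < Liminf at_infinity (\<lambda>x. \<phi> x / ereal (norm x))"
    using assms ereal_dense2 unfolding coercive_def by blast
  then have "eventually (\<lambda>x. ereal c < \<phi> x / ereal (norm x)) at_infinity"
    by (intro less_LiminfD) simp
  then obtain b where b: "\<And>x. b \<le> norm x \<Longrightarrow> ereal c < \<phi> x / ereal (norm x)"
    unfolding eventually_at_infinity by blast
  have "ereal (c * norm x) < \<phi> x" if "max b 1 \<le> norm x" for x
  proof -
    have x: "0 < norm x" and "ereal c < \<phi> x / ereal (norm x)"
      using b that by auto
    then show ?thesis
    proof (cases "\<phi> x")
      case (real r)
      with \<open>ereal c < \<phi> x / ereal (norm x)\<close> x have "c < r / norm x"
        by simp
      with x real show ?thesis
        by (simp add: less_divide_eq)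
    qed auto
  qed
  with c show ?thesis
    using that[of c "max b 1"] by simp
qed

lemma coercive_base_linear_growth:
  fixes \<phi> :: "'a::real_normed_vector \<Rightarrow> ereal"
  assumes "\<alpha> < 0" and nonneg: "\<And>x. 0 \<le> \<phi> x" and "coercive \<phi>"
  obtains m where "0 < m" "\<And>x. \<phi> x \<noteq> \<infinity> \<Longrightarrow> m * (1 + norm x) \<le> 1 - \<alpha> * real_of_ereal (\<phi> x)"
proof -
  obtain c R where c: "0 < c" and cR: "\<And>x. R \<le> norm x \<Longrightarrow> ereal (c * norm x) < \<phi> x"
    using coercive_linear_lower_bound[OF \<open>coercive \<phi>\<close>] by blast
  define m where "m = min (1 / (1 + \<bar>R\<bar>)) (- \<alpha> * c)"
  have "0 < m"
    using \<open>\<alpha> < 0\<close> c by (simp add: m_def mult_neg_pos)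
  have m_le: "m \<le> - \<alpha> * c" "m \<le> 1 / (1 + \<bar>R\<bar>)"
    by (simp_all add: m_def)
  have "m \<le> 1"
    using m_le(2) by (rule order_trans) simp
  have "m * (1 + \<bar>R\<bar>) \<le> 1"
    using m_le(2) by (simp add: le_divide_eq add_pos_nonneg)
  have "m * (1 + norm x) \<le> 1 - \<alpha> * real_of_ereal (\<phi> x)" if "\<phi> x \<noteq> \<infinity>" for x
  proof -
    define v where "v = real_of_ereal (\<phi> x)"
    have v: "\<phi> x = ereal v" "0 \<le> v"
      using that nonneg[of x] by (cases "\<phi> x"; simp add: v_def)+
    show ?thesis
    proof (cases "R \<le> norm x")
      case True
      then have "c * norm x \<le> v"
        using cR[of x] v by simp
      then have "(- \<alpha>) * (c * norm x) \<le> (- \<alpha>) * v"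
        using \<open>\<alpha> < 0\<close> by (intro mult_left_mono) auto
      moreover have "m * norm x \<le> (- \<alpha> * c) * norm x"
        using m_le(1) by (intro mult_right_mono) auto
      ultimately show ?thesis
        using \<open>m \<le> 1\<close> by (simp add: v_def algebra_simps)
    next
      case False
      then have "m * (1 + norm x) \<le> m * (1 + \<bar>R\<bar>)"
        using \<open>0 < m\<close> by (intro mult_left_mono) auto
      moreover have "0 \<le> - \<alpha> * v"
        using \<open>\<alpha> < 0\<close> v by (simp add: mult_nonpos_nonneg)
      ultimately show ?thesis
        using \<open>m * (1 + \<bar>R\<bar>) \<le> 1\<close> unfolding v_def by linarith
    qed
  qed
  with \<open>0 < m\<close> show ?thesis
    using that by blast
qed

lemma pow_base_le_one_plus_norm_powr:
  fixes \<phi> :: "'a::real_normed_vector \<Rightarrow> ereal"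
  assumes "\<alpha> < 0" and "\<And>x. 0 \<le> \<phi> x" and "coercive \<phi>" and "s < 0"
  obtains C where "0 \<le> C" "\<And>x. pow_base \<alpha> (\<phi> x) s \<le> C * (1 + norm x) powr s"
proof -
  obtain m where m: "0 < m"
    and growth: "\<And>x. \<phi> x \<noteq> \<infinity> \<Longrightarrow> m * (1 + norm x) \<le> 1 - \<alpha> * real_of_ereal (\<phi> x)"
    using coercive_base_linear_growth[OF assms(1-3)] by blast
  have "pow_base \<alpha> (\<phi> x) s \<le> m powr s * (1 + norm x) powr s" for x
  proof (cases "\<phi> x = \<infinity>")
    case False
    have "pow_base \<alpha> (\<phi> x) s = (1 - \<alpha> * real_of_ereal (\<phi> x)) powr s"
      using False by (simp add: pow_base_def)
    also have "\<dots> \<le> (m * (1 + norm x)) powr s"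
      using growth[OF False] m \<open>s < 0\<close> by (intro powr_mono2') (auto intro!: mult_pos_pos add_pos_nonneg)
    also have "\<dots> = m powr s * (1 + norm x) powr s"
      using m by (simp add: powr_mult add_nonneg_nonneg)
    finally show ?thesis .
  qed (simp add: pow_base_def)
  then show ?thesis
    using that[of "m powr s"] by simp
qed

lemma nn_integral_one_plus_norm_powr_pow_base_finite:
  fixes \<phi> :: "'a::euclidean_space \<Rightarrow> ereal"
  assumes "\<alpha> < 0" and "\<And>x. 0 \<le> \<phi> x" and "coercive \<phi>" and "s < 0"
    and "real DIM('a) + p + s < 0"
  shows "(\<integral>\<^sup>+x. ennreal ((1 + norm x) powr p * pow_base \<alpha> (\<phi> x) s) \<partial>lborel) < \<infinity>"
proof -
  obtain C where C: "0 \<le> C" "\<And>x. pow_base \<alpha> (\<phi> x) s \<le> C * (1 + norm x) powr s"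
    using pow_base_le_one_plus_norm_powr[OF assms(1-4)] by blast
  have "(1 + norm x) powr p * pow_base \<alpha> (\<phi> x) s \<le> C * (1 + norm x) powr (- (- p - s))" for x :: 'a
  proof -
    have "(1 + norm x) powr p * pow_base \<alpha> (\<phi> x) s \<le> (1 + norm x) powr p * (C * (1 + norm x) powr s)"
      using C by (intro mult_left_mono) auto
    also have "\<dots> = C * (1 + norm x) powr (- (- p - s))"
      by (simp add: powr_add[symmetric] add_ac)
    finally show ?thesis .
  qed
  then have "(\<integral>\<^sup>+x. ennreal ((1 + norm x) powr p * pow_base \<alpha> (\<phi> x) s) \<partial>lborel)
      \<le> (\<integral>\<^sup>+x. ennreal C * ennreal ((1 + norm (x::'a)) powr (- (- p - s))) \<partial>lborel)"
    using C by (intro nn_integral_mono) (simp add: ennreal_mult[symmetric] ennreal_leI)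
  also have "\<dots> = ennreal C * (\<integral>\<^sup>+x. ennreal ((1 + norm (x::'a)) powr (- (- p - s))) \<partial>lborel)"
    by (rule nn_integral_cmult) simp
  also have "\<dots> < \<infinity>"
    using nn_integral_one_plus_norm_powr_finite[of "- p - s", where 'a='a] assms(5)
    by (simp add: ennreal_mult_less_top)
  finally show ?thesis .
qed

lemma neg_one_div_less_iff:
  fixes d \<alpha> :: real
  assumes "0 < d" and "\<alpha> < 0"
  shows "- 1 / d < \<alpha> \<longleftrightarrow> d + 1 / \<alpha> < 0"
  using assms by (auto simp: field_simps)

lemma nn_integral_norm_powr_pow_base_finite:
  fixes \<phi> :: "'a::euclidean_space \<Rightarrow> ereal"
  assumes "\<alpha> < 0" and "\<And>x. 0 \<le> \<phi> x" and "coercive \<phi>" and "s < 0" and "0 \<le> p"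
    and "real DIM('a) + p + s < 0"
  shows "(\<integral>\<^sup>+x. ennreal (norm x powr p * pow_base \<alpha> (\<phi> x) s) \<partial>lborel) < \<infinity>"
proof -
  have "(\<integral>\<^sup>+x. ennreal (norm x powr p * pow_base \<alpha> (\<phi> x) s) \<partial>lborel)
      \<le> (\<integral>\<^sup>+x. ennreal ((1 + norm x) powr p * pow_base \<alpha> (\<phi> x) s) \<partial>lborel)"
    using \<open>0 \<le> p\<close>
    by (auto intro!: nn_integral_mono ennreal_leI mult_right_mono powr_mono2 simp: pow_base_def)
  also have "\<dots> < \<infinity>"
    using assms(1-4,6) by (rule nn_integral_one_plus_norm_powr_pow_base_finite)
  finally show ?thesis .
qed

lemma nn_integral_pow_base_finite:
  fixes \<phi> :: "'a::euclidean_space \<Rightarrow> ereal"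
  assumes "\<alpha> < 0" and "\<And>x. 0 \<le> \<phi> x" and "coercive \<phi>" and "s < 0"
    and "real DIM('a) + s < 0"
  shows "(\<integral>\<^sup>+x. ennreal (pow_base \<alpha> (\<phi> x) s) \<partial>lborel) < \<infinity>"
  using nn_integral_one_plus_norm_powr_pow_base_finite[OF assms(1-4), of 0] assms(5)
  by (simp add: add_nonneg_eq_0_iff)

lemma f_alpha_powr: "f_alpha \<alpha> \<phi> x powr r = pow_base \<alpha> (\<phi> x) (r / \<alpha>)"
  by (simp add: f_alpha_def pow_base_def powr_powr)

theorem lemma2p2:
  fixes \<alpha> :: real and \<phi> :: "'n::euclidean_space \<Rightarrow> ereal"
  assumes "\<alpha> < 0"
    and "\<phi> \<in> base_C_plus"
  shows "(\<forall>(l::real) (p::real).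
           0 \<le> l \<and> l < real DIM('n) \<and> 0 \<le> p \<and> - 1 / (real DIM('n) - l + p) < \<alpha> \<longrightarrow>
           (\<integral>\<^sup>+ x. ennreal (norm x powr p * pow_base \<alpha> (\<phi> x) (1 / \<alpha> - l)) \<partial>lborel) < \<infinity>) \<and>
         (- 1 / real DIM('n) < \<alpha> \<longrightarrow>
           (\<integral>\<^sup>+ x. ennreal (f_alpha \<alpha> \<phi> x) \<partial>lborel) < \<infinity> \<and>
           (\<integral>\<^sup>+ x. ennreal (f_alpha \<alpha> \<phi> x powr (1 - \<alpha>)) \<partial>lborel) < \<infinity>)"
proof -
  have \<phi>: "\<And>x. 0 \<le> \<phi> x" "coercive \<phi>"
    using assms(2) by (auto simp: base_C_plus_def)
  have "1 / \<alpha> < 0"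
    using assms(1) by simp
  have weighted: "(\<integral>\<^sup>+ x. ennreal (norm x powr p * pow_base \<alpha> (\<phi> x) (1 / \<alpha> - l)) \<partial>lborel) < \<infinity>"
    if "0 \<le> l" "0 \<le> p" "- 1 / (real DIM('n) - l + p) < \<alpha>" "l < real DIM('n)" for l p
  proof (rule nn_integral_norm_powr_pow_base_finite[OF assms(1) \<phi> _ \<open>0 \<le> p\<close>])
    show "1 / \<alpha> - l < 0"
      using \<open>1 / \<alpha> < 0\<close> \<open>0 \<le> l\<close> by linarith
    show "real DIM('n) + p + (1 / \<alpha> - l) < 0"
      using that neg_one_div_less_iff[OF _ assms(1), of "real DIM('n) - l + p"] by simp
  qed
  have "real DIM('n) + 1 / \<alpha> < 0" if "- 1 / real DIM('n) < \<alpha>"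
    using that neg_one_div_less_iff[OF _ assms(1), of "real DIM('n)"] by simp
  moreover have "(1 - \<alpha>) / \<alpha> = 1 / \<alpha> - 1"
    using assms(1) by (simp add: diff_divide_distrib)
  ultimately show ?thesis
    using weighted \<open>1 / \<alpha> < 0\<close> nn_integral_pow_base_finite[OF assms(1) \<phi>, of "1 / \<alpha>"]
      nn_integral_pow_base_finite[OF assms(1) \<phi>, of "(1 - \<alpha>) / \<alpha>"]
    unfolding f_alpha_powr by (auto simp: f_alpha_def)
qed

end
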